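(* Let $\varphi\colon\mathcal{M}\to\mathcal{X}$ be a smooth lift, $y\in\mathcal{M}$, $x=\varphi(y)$. Then $W_y=\{w\in\mathcal{E}: \exists\,\alpha>0 \text{ such that } y \text{ is 2-critical for } g=f\circ\varphi \text{ with } f(x')=\langle x',w\rangle+\tfrac{\alpha}{2}\|x'-x\|^2\}$. In particular, $W_y$ is a convex cone.
   Context: $\mathcal{E}$ is a finite-dimensional real inner product space, $\mathcal{M}$ a smooth manifold, and $\varphi\colon\mathcal{M}\to\mathcal{E}$ smooth with $\varphi(\mathcal{M})=\mathcal{X}$. For $f\colon\mathcal{E}\to\mathbb{R}$, $g=f\circ\varphi$; $y$ is 2-critical for $g$ if $(g\circ c)'(0)=0$ and $(g\circ c)''(0)\ge0$ for all smooth curves $c\colon\mathbb{R}\to\mathcal{M}$ with $c(0)=y$. $W_y$ is the set of $w\in\mathcal{E}$ for which there exists a twice differentiable $f\colon\mathcal{E}\to\mathbb{R}$ with $\nabla f(x)=w$ and $y$ 2-critical for $g=f\circ\varphi$. *)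

theory Defs
  imports "HOL-Analysis.Analysis"
begin

fun C_k_on :: "nat \<Rightarrow> 'a::euclidean_space set \<Rightarrow> ('a \<Rightarrow> 'b::real_normed_vector) \<Rightarrow> bool" where
  "C_k_on 0 U f = continuous_on U f"
| "C_k_on (Suc k) U f =
     ((\<forall>x\<in>U. f differentiable (at x)) \<and>
      (\<forall>v. C_k_on k U (\<lambda>x. frechet_derivative f (at x) v)))"

definition smooth_on :: "'a::euclidean_space set \<Rightarrow> ('a \<Rightarrow> 'b::real_normed_vector) \<Rightarrow> bool" where
  "smooth_on U f \<longleftrightarrow> (\<forall>k. C_k_on k U f)"

definition smooth_atlas :: "('m::topological_space set \<times> ('m \<Rightarrow> 'n::euclidean_space)) set \<Rightarrow> bool" where
  "smooth_atlas A \<longleftrightarrow>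
     (\<forall>(U, \<psi>)\<in>A. open U \<and> open (\<psi> ` U) \<and> homeomorphism U (\<psi> ` U) \<psi> (inv_into U \<psi>)) \<and>
     (\<Union> (fst ` A) = UNIV) \<and>
     (\<forall>(U, \<psi>)\<in>A. \<forall>(V, \<eta>)\<in>A. smooth_on (\<psi> ` (U \<inter> V)) (\<eta> \<circ> inv_into U \<psi>))"

definition smooth_map :: "('m::topological_space set \<times> ('m \<Rightarrow> 'n::euclidean_space)) set
    \<Rightarrow> ('m \<Rightarrow> 'e::real_normed_vector) \<Rightarrow> bool" where
  "smooth_map A \<phi> \<longleftrightarrow> continuous_on UNIV \<phi> \<and>
     (\<forall>(U, \<psi>)\<in>A. smooth_on (\<psi> ` U) (\<phi> \<circ> inv_into U \<psi>))"

definition smooth_curve :: "('m::topological_space set \<times> ('m \<Rightarrow> 'n::euclidean_space)) set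
    \<Rightarrow> (real \<Rightarrow> 'm) \<Rightarrow> bool" where
  "smooth_curve A c \<longleftrightarrow> continuous_on UNIV c \<and>
     (\<forall>(U, \<psi>)\<in>A. smooth_on (c -` U) (\<psi> \<circ> c))"

definition two_critical :: "('m::topological_space set \<times> ('m \<Rightarrow> 'n::euclidean_space)) set
    \<Rightarrow> ('m \<Rightarrow> real) \<Rightarrow> 'm \<Rightarrow> bool" where
  "two_critical A g y \<longleftrightarrow>
     (\<forall>c. smooth_curve A c \<and> c 0 = y \<longrightarrow>
        deriv (g \<circ> c) 0 = 0 \<and> deriv (deriv (g \<circ> c)) 0 \<ge> 0)"

definition twice_differentiable :: "('e::euclidean_space \<Rightarrow> real) \<Rightarrow> bool" where
  "twice_differentiable f \<longleftrightarrow>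
     (\<exists>G. (\<forall>x. (f has_derivative (\<lambda>h. G x \<bullet> h)) (at x)) \<and> (\<forall>x. G differentiable (at x)))"

definition W_set :: "('m::topological_space set \<times> ('m \<Rightarrow> 'n::euclidean_space)) set
    \<Rightarrow> ('m \<Rightarrow> 'e::euclidean_space) \<Rightarrow> 'm \<Rightarrow> 'e set" where
  "W_set A \<phi> y = {w. \<exists>f. twice_differentiable f \<and>
       (f has_derivative (\<lambda>h. w \<bullet> h)) (at (\<phi> y)) \<and> two_critical A (f \<circ> \<phi>) y}"

end

theory Submission
  imports Defs
begin

text \<open>Along a smooth curve c through y the curve \<open>\<phi> \<circ> c\<close> has a velocity v and an
  acceleration a at 0, and the chain rule gives \<open>(f \<circ> \<phi> \<circ> c)'(0) = \<langle>\<nabla>f(x), v\<rangle>\<close> and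
  \<open>(f \<circ> \<phi> \<circ> c)''(0) = \<langle>\<nabla>\<^sup>2f(x) v, v\<rangle> + \<langle>\<nabla>f(x), a\<rangle>\<close>.  Hence 2-criticality of
  \<open>f \<circ> \<phi>\<close> at y is a condition on \<open>\<nabla>f(x)\<close> and on the Hessian quadratic form, tested
  against the set of jets (v, a).  Bounding the Hessian form by \<open>K \<parallel>v\<parallel>\<^sup>2\<close> shows that the
  quadratic model with \<open>\<alpha> = K\<close> is 2-critical whenever f is, and the quadratic model
  itself is a twice differentiable function with gradient w at x.  In terms of jets the
  resulting set is \<open>{w. \<exists>\<alpha>>0. \<forall>(v, a). \<langle>w, v\<rangle> = 0 \<and> \<alpha> \<parallel>v\<parallel>\<^sup>2 + \<langle>w, a\<rangle> \<ge> 0}\<close>, which is closed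
  under sums (add the \<open>\<alpha>\<close>'s) and under nonnegative scaling.\<close>

lemma bounded_linear_inner_self_le:
  assumes "bounded_linear L"
  shows "\<exists>K>0. \<forall>v. L v \<bullet> v \<le> K * (v \<bullet> v)"
proof -
  obtain K where "K > 0" and K: "\<And>v. norm (L v) \<le> norm v * K"
    using bounded_linear.pos_bounded[OF assms] by blast
  have "L v \<bullet> v \<le> K * (v \<bullet> v)" for v
  proof -
    have "L v \<bullet> v \<le> norm (L v) * norm v"
      by (rule order_trans[OF abs_ge_self Cauchy_Schwarz_ineq2])
    also have "\<dots> \<le> norm v * K * norm v"
      by (rule mult_right_mono[OF K]) simp
    finally show ?thesis
      by (simp add: power2_norm_eq_inner[symmetric] power2_eq_square algebra_simps)
  qed
  with \<open>K > 0\<close> show ?thesis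
    by blast
qed

lemma convex_cone_quadratic_dual:
  fixes J :: "('e::real_inner \<times> 'e) set"
  shows "convex_cone {w. \<exists>\<alpha>>0. \<forall>(v, a) \<in> J. w \<bullet> v = 0 \<and> 0 \<le> \<alpha> * (v \<bullet> v) + w \<bullet> a}"
    (is "convex_cone ?K")
  unfolding convex_cone_iff
proof (intro conjI ballI allI impI)
  show "0 \<in> ?K"
    by (auto intro!: exI[of _ 1])
next
  fix w1 w2 assume "w1 \<in> ?K" "w2 \<in> ?K"
  then obtain \<alpha>1 \<alpha>2 where "\<alpha>1 > 0" "\<alpha>2 > 0"
    and h1: "\<forall>(v, a) \<in> J. w1 \<bullet> v = 0 \<and> 0 \<le> \<alpha>1 * (v \<bullet> v) + w1 \<bullet> a"
    and h2: "\<forall>(v, a) \<in> J. w2 \<bullet> v = 0 \<and> 0 \<le> \<alpha>2 * (v \<bullet> v) + w2 \<bullet> a"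
    by blast
  have "(w1 + w2) \<bullet> v = 0 \<and> 0 \<le> (\<alpha>1 + \<alpha>2) * (v \<bullet> v) + (w1 + w2) \<bullet> a" if "(v, a) \<in> J" for v a
    using bspec[OF h1 that] bspec[OF h2 that] by (simp add: inner_add_left distrib_right)
  with \<open>\<alpha>1 > 0\<close> \<open>\<alpha>2 > 0\<close> show "w1 + w2 \<in> ?K"
    by (intro CollectI exI[of _ "\<alpha>1 + \<alpha>2"]) auto
next
  fix w and t :: real assume "w \<in> ?K" "0 \<le> t"
  then obtain \<alpha> where "\<alpha> > 0" and "\<forall>(v, a) \<in> J. w \<bullet> v = 0 \<and> 0 \<le> \<alpha> * (v \<bullet> v) + w \<bullet> a"
    by blast
  moreover have "0 \<le> (t * \<alpha> + 1) * (v \<bullet> v) + t *\<^sub>R w \<bullet> a"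
    if "0 \<le> \<alpha> * (v \<bullet> v) + w \<bullet> a" for v a :: 'e
  proof -
    have "(t * \<alpha> + 1) * (v \<bullet> v) + t *\<^sub>R w \<bullet> a = t * (\<alpha> * (v \<bullet> v) + w \<bullet> a) + v \<bullet> v"
      by (simp add: algebra_simps)
    with that \<open>0 \<le> t\<close> show ?thesis
      by simp
  qed
  \<comment> \<open>The constant \<open>t * \<alpha>\<close> alone would not be positive for \<open>t = 0\<close>.\<close>
  moreover have "0 < t * \<alpha> + 1"
    using \<open>0 \<le> t\<close> \<open>\<alpha> > 0\<close> by (simp add: add_nonneg_pos)
  ultimately show "t *\<^sub>R w \<in> ?K"
    by (intro CollectI exI[of _ "t * \<alpha> + 1"]) auto
qed

abbreviation quadratic_model :: "'e::real_inner \<Rightarrow> real \<Rightarrow> 'e \<Rightarrow> 'e \<Rightarrow> real" where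
  "quadratic_model w \<alpha> x0 \<equiv> \<lambda>x. x \<bullet> w + \<alpha> / 2 * (norm (x - x0))\<^sup>2"

lemma has_derivative_quadratic_model:
  "(quadratic_model w \<alpha> x0 has_derivative (\<lambda>h. (w + \<alpha> *\<^sub>R (x - x0)) \<bullet> h)) (at x)"
proof -
  have "((\<lambda>x. x \<bullet> w + \<alpha> / 2 * ((x - x0) \<bullet> (x - x0))) has_derivative
        (\<lambda>h. (w + \<alpha> *\<^sub>R (x - x0)) \<bullet> h)) (at x)"
    by (auto intro!: derivative_eq_intros simp: fun_eq_iff algebra_simps inner_commute)
  then show ?thesis
    by (simp add: power2_norm_eq_inner)
qed

lemma twice_differentiable_quadratic_model:
  fixes w :: "'e::euclidean_space"
  shows "twice_differentiable (quadratic_model w \<alpha> x0)"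
  unfolding twice_differentiable_def
proof (intro exI conjI allI)
  show "(quadratic_model w \<alpha> x0 has_derivative (\<lambda>h. (w + \<alpha> *\<^sub>R (x - x0)) \<bullet> h)) (at x)" for x
    by (rule has_derivative_quadratic_model)
  show "(\<lambda>x. w + \<alpha> *\<^sub>R (x - x0)) differentiable (at x)" for x
    by (intro differentiable_add differentiable_const differentiable_scaleR differentiable_diff differentiable_ident)
qed

definition second_order_jet :: "(real \<Rightarrow> 'a::real_normed_vector) \<Rightarrow> 'a \<Rightarrow> 'a \<Rightarrow> bool" where
  "second_order_jet \<gamma> v a \<longleftrightarrow>
     (\<exists>\<gamma>'. (\<forall>\<^sub>F t in nhds 0. (\<gamma> has_vector_derivative \<gamma>' t) (at t)) \<and>
           \<gamma>' 0 = v \<and> (\<gamma>' has_vector_derivative a) (at 0))"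

lemma deriv_comp_second_order_jet:
  fixes f :: "'e::real_inner \<Rightarrow> real"
  assumes "second_order_jet \<gamma> v a"
    and grad: "\<And>x. (f has_derivative (\<lambda>h. G x \<bullet> h)) (at x)"
    and DG: "(G has_derivative DG) (at (\<gamma> 0))"
  shows "deriv (f \<circ> \<gamma>) 0 = G (\<gamma> 0) \<bullet> v"
    and "deriv (deriv (f \<circ> \<gamma>)) 0 = DG v \<bullet> v + G (\<gamma> 0) \<bullet> a"
proof -
  obtain \<gamma>' where vel: "\<forall>\<^sub>F t in nhds 0. (\<gamma> has_vector_derivative \<gamma>' t) (at t)"
    and v: "\<gamma>' 0 = v" and acc: "(\<gamma>' has_vector_derivative a) (at 0)"
    using assms(1) unfolding second_order_jet_def by blast
  have chain: "((f \<circ> \<gamma>) has_real_derivative G (\<gamma> t) \<bullet> \<gamma>' t) (at t)"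
    if "(\<gamma> has_vector_derivative \<gamma>' t) (at t)" for t
    using vector_derivative_diff_chain_within[OF that has_derivative_at_withinI[OF grad]]
    by (simp add: has_real_derivative_iff_has_vector_derivative)
  have vel0: "(\<gamma> has_vector_derivative v) (at 0)"
    using eventually_nhds_x_imp_x[OF vel] v by simp
  then show "deriv (f \<circ> \<gamma>) 0 = G (\<gamma> 0) \<bullet> v"
    using chain v by (auto intro: DERIV_imp_deriv)
  have "\<forall>\<^sub>F t in nhds 0. deriv (f \<circ> \<gamma>) t = G (\<gamma> t) \<bullet> \<gamma>' t"
    using vel by eventually_elim (auto intro: DERIV_imp_deriv chain)
  then have "deriv (deriv (f \<circ> \<gamma>)) 0 = deriv (\<lambda>t. G (\<gamma> t) \<bullet> \<gamma>' t) 0"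
    by (rule deriv_cong_ev) simp
  also have "\<dots> = DG v \<bullet> v + G (\<gamma> 0) \<bullet> a"
  proof (rule DERIV_imp_deriv)
    have "((G \<circ> \<gamma>) has_vector_derivative DG v) (at 0)"
      using vector_derivative_diff_chain_within[OF vel0 has_derivative_at_withinI[OF DG]] by simp
    from has_derivative_inner[OF this[unfolded has_vector_derivative_def]
        acc[unfolded has_vector_derivative_def]]
    have "((\<lambda>t. G (\<gamma> t) \<bullet> \<gamma>' t) has_derivative (\<lambda>h. (DG v \<bullet> v + G (\<gamma> 0) \<bullet> a) * h)) (at 0)"
      using v by (simp add: algebra_simps)
    then show "((\<lambda>t. G (\<gamma> t) \<bullet> \<gamma>' t) has_real_derivative DG v \<bullet> v + G (\<gamma> 0) \<bullet> a) (at 0)"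
      by (simp add: has_field_derivative_def)
  qed
  finally show "deriv (deriv (f \<circ> \<gamma>)) 0 = DG v \<bullet> v + G (\<gamma> 0) \<bullet> a" .
qed

lemma C_k_on_2_D:
  assumes "C_k_on 2 U f" "x \<in> U"
  shows "f differentiable (at x)"
    and "(\<lambda>x. frechet_derivative f (at x) v) differentiable (at x)"
  using assms by (simp_all add: numeral_2_eq_2)

lemma second_order_jet_comp_C2:
  fixes \<beta> :: "real \<Rightarrow> 'n::euclidean_space" and h :: "'n \<Rightarrow> 'e::real_normed_vector"
  assumes S: "open S" "0 \<in> S" and \<beta>: "C_k_on 2 S \<beta>" and h: "C_k_on 2 T h" and \<beta>T: "\<beta> ` S \<subseteq> T"
    and \<gamma>: "\<And>t. t \<in> S \<Longrightarrow> \<gamma> t = h (\<beta> t)"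
  shows "\<exists>v a. second_order_jet \<gamma> v a"
proof -
  define \<beta>' where "\<beta>' t = frechet_derivative \<beta> (at t) 1" for t
  \<comment> \<open>\<open>C_k_on\<close> only controls derivatives in fixed directions, so the velocity
    \<open>Dh(\<beta> t) (\<beta>'(t))\<close> is expanded in the basis to make its differentiability visible.\<close>
  define \<gamma>' where "\<gamma>' t = (\<Sum>i\<in>Basis. (\<beta>' t \<bullet> i) *\<^sub>R frechet_derivative h (at (\<beta> t)) i)" for t
  have vel: "(\<gamma> has_vector_derivative \<gamma>' t) (at t)" if "t \<in> S" for t
  proof -
    let ?D\<beta> = "frechet_derivative \<beta> (at t)" and ?Dh = "frechet_derivative h (at (\<beta> t))"
    have D\<beta>: "(\<beta> has_derivative ?D\<beta>) (at t)"
      using C_k_on_2_D(1)[OF \<beta> that] frechet_derivative_works by blast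
    have Dh: "(h has_derivative ?Dh) (at (\<beta> t))"
      using C_k_on_2_D(1)[OF h] \<beta>T that frechet_derivative_works by blast
    have lin: "linear ?D\<beta>" "linear ?Dh"
      using D\<beta> Dh has_derivative_linear by blast+
    have "?Dh (?D\<beta> r) = r *\<^sub>R \<gamma>' t" for r
    proof -
      have "?D\<beta> r = r *\<^sub>R (\<Sum>i\<in>Basis. (\<beta>' t \<bullet> i) *\<^sub>R i)"
        using linear_scale[OF lin(1), of r 1] by (simp add: \<beta>'_def euclidean_representation)
      then show ?thesis
        by (simp add: \<gamma>'_def linear_scale[OF lin(2)] linear_sum[OF lin(2)] scaleR_sum_right)
    qed
    then have "((h \<circ> \<beta>) has_vector_derivative \<gamma>' t) (at t)"
      using diff_chain_at[OF D\<beta> Dh] by (simp add: has_vector_derivative_def comp_def)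
    then show ?thesis
      by (rule has_vector_derivative_transform_within_open[OF _ S(1) that]) (simp add: \<gamma>)
  qed
  have "\<gamma>' differentiable (at 0)"
    unfolding \<gamma>'_def \<beta>'_def
  proof (intro differentiable_sum finite_Basis differentiable_scaleR differentiable_inner
      differentiable_const ballI)
    show "(\<lambda>t. frechet_derivative \<beta> (at t) 1) differentiable (at 0)"
      using C_k_on_2_D(2)[OF \<beta> S(2)] .
    show "(\<lambda>t. frechet_derivative h (at (\<beta> t)) i) differentiable (at 0)" for i
      using differentiable_compose[OF C_k_on_2_D(2)[OF h] C_k_on_2_D(1)[OF \<beta> S(2)]] \<beta>T S(2)
      by (auto simp: comp_def)
  qed
  then have "(\<gamma>' has_vector_derivative vector_derivative \<gamma>' (at 0)) (at 0)"
    by (rule vector_derivative_works[THEN iffD1])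
  moreover have "\<forall>\<^sub>F t in nhds 0. (\<gamma> has_vector_derivative \<gamma>' t) (at t)"
    using S vel eventually_nhds by blast
  ultimately show ?thesis
    unfolding second_order_jet_def by blast
qed

lemma smooth_curve_second_order_jet:
  fixes A :: "('m::topological_space set \<times> ('m \<Rightarrow> 'n::euclidean_space)) set"
    and \<phi> :: "'m \<Rightarrow> 'e::real_normed_vector"
  assumes A: "smooth_atlas A" and \<phi>: "smooth_map A \<phi>" and c: "smooth_curve A c"
  shows "\<exists>v a. second_order_jet (\<phi> \<circ> c) v a"
proof -
  have "c 0 \<in> \<Union> (fst ` A)"
    using A by (simp add: smooth_atlas_def)
  then obtain U \<psi> where chart: "(U, \<psi>) \<in> A" and "c 0 \<in> U"
    by auto
  have "open U" and hom: "homeomorphism U (\<psi> ` U) \<psi> (inv_into U \<psi>)"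
    using A chart unfolding smooth_atlas_def by blast+
  have "open (c -` U)"
    using c \<open>open U\<close> unfolding smooth_curve_def by (simp add: open_vimage)
  moreover have "C_k_on 2 (c -` U) (\<psi> \<circ> c)"
    using c chart unfolding smooth_curve_def smooth_on_def by blast
  moreover have "C_k_on 2 (\<psi> ` U) (\<phi> \<circ> inv_into U \<psi>)"
    using \<phi> chart unfolding smooth_map_def smooth_on_def by blast
  moreover have "(\<phi> \<circ> c) t = (\<phi> \<circ> inv_into U \<psi>) ((\<psi> \<circ> c) t)" if "t \<in> c -` U" for t
    using hom that unfolding homeomorphism_def by simp
  ultimately show ?thesis
    using \<open>c 0 \<in> U\<close>
    by (intro second_order_jet_comp_C2[where \<beta> = "\<psi> \<circ> c" and h = "\<phi> \<circ> inv_into U \<psi>"]) auto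
qed

definition curve_jets :: "('m::topological_space set \<times> ('m \<Rightarrow> 'n::euclidean_space)) set
    \<Rightarrow> ('m \<Rightarrow> 'e::real_normed_vector) \<Rightarrow> 'm \<Rightarrow> ('e \<times> 'e) set" where
  "curve_jets A \<phi> y = {(v, a). \<exists>c. smooth_curve A c \<and> c 0 = y \<and> second_order_jet (\<phi> \<circ> c) v a}"

lemma two_critical_comp_iff_curve_jets:
  fixes \<phi> :: "'m::topological_space \<Rightarrow> 'e::real_inner" and f :: "'e \<Rightarrow> real"
  assumes A: "smooth_atlas A" and \<phi>: "smooth_map A \<phi>"
    and grad: "\<And>x. (f has_derivative (\<lambda>h. G x \<bullet> h)) (at x)"
    and DG: "(G has_derivative DG) (at (\<phi> y))"
  shows "two_critical A (f \<circ> \<phi>) y \<longleftrightarrow>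
    (\<forall>(v, a) \<in> curve_jets A \<phi> y. G (\<phi> y) \<bullet> v = 0 \<and> 0 \<le> DG v \<bullet> v + G (\<phi> y) \<bullet> a)"
proof -
  have derivs: "deriv (f \<circ> \<phi> \<circ> c) 0 = G (\<phi> y) \<bullet> v \<and>
      deriv (deriv (f \<circ> \<phi> \<circ> c)) 0 = DG v \<bullet> v + G (\<phi> y) \<bullet> a"
    if "c 0 = y" "second_order_jet (\<phi> \<circ> c) v a" for c v a
    using deriv_comp_second_order_jet[OF that(2) grad] DG that(1) by (simp add: o_assoc)
  show ?thesis
  proof (intro iffI ballI; clarify?)
    fix v a assume crit: "two_critical A (f \<circ> \<phi>) y" and "(v, a) \<in> curve_jets A \<phi> y"
    then obtain c where "smooth_curve A c" "c 0 = y" "second_order_jet (\<phi> \<circ> c) v a"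
      unfolding curve_jets_def by blast
    with crit derivs show "G (\<phi> y) \<bullet> v = 0 \<and> 0 \<le> DG v \<bullet> v + G (\<phi> y) \<bullet> a"
      unfolding two_critical_def by force
  next
    assume jets: "\<forall>(v, a) \<in> curve_jets A \<phi> y. G (\<phi> y) \<bullet> v = 0 \<and> 0 \<le> DG v \<bullet> v + G (\<phi> y) \<bullet> a"
    show "two_critical A (f \<circ> \<phi>) y"
      unfolding two_critical_def
    proof (intro allI impI; elim conjE)
      fix c assume "smooth_curve A c" "c 0 = y"
      moreover obtain v a where "second_order_jet (\<phi> \<circ> c) v a"
        using smooth_curve_second_order_jet[OF A \<phi> \<open>smooth_curve A c\<close>] by blast
      ultimately have "(v, a) \<in> curve_jets A \<phi> y" and derivs_c:
        "deriv (f \<circ> \<phi> \<circ> c) 0 = G (\<phi> y) \<bullet> v \<and>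
         deriv (deriv (f \<circ> \<phi> \<circ> c)) 0 = DG v \<bullet> v + G (\<phi> y) \<bullet> a"
        using derivs unfolding curve_jets_def by blast+
      with jets show "deriv (f \<circ> \<phi> \<circ> c) 0 = 0 \<and> 0 \<le> deriv (deriv (f \<circ> \<phi> \<circ> c)) 0"
        by auto
    qed
  qed
qed

lemma two_critical_quadratic_model_iff:
  fixes \<phi> :: "'m::topological_space \<Rightarrow> 'e::real_inner"
  assumes "smooth_atlas A" "smooth_map A \<phi>"
  shows "two_critical A (quadratic_model w \<alpha> (\<phi> y) \<circ> \<phi>) y \<longleftrightarrow>
    (\<forall>(v, a) \<in> curve_jets A \<phi> y. w \<bullet> v = 0 \<and> 0 \<le> \<alpha> * (v \<bullet> v) + w \<bullet> a)"
proof -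
  have "((\<lambda>x. w + \<alpha> *\<^sub>R (x - \<phi> y)) has_derivative (\<lambda>h. \<alpha> *\<^sub>R h)) (at (\<phi> y))"
    by (auto intro!: derivative_eq_intros)
  from two_critical_comp_iff_curve_jets[OF assms has_derivative_quadratic_model this]
  show ?thesis by simp
qed

lemma W_set_eq_quadratic_models:
  fixes \<phi> :: "'m::topological_space \<Rightarrow> 'e::euclidean_space"
  assumes A: "smooth_atlas A" and \<phi>: "smooth_map A \<phi>"
  shows "W_set A \<phi> y = {w. \<exists>\<alpha>>0. two_critical A (quadratic_model w \<alpha> (\<phi> y) \<circ> \<phi>) y}"
proof (intro equalityI subsetI CollectI)
  fix w assume "w \<in> W_set A \<phi> y"
  then obtain f G where grad: "\<And>x. (f has_derivative (\<lambda>h. G x \<bullet> h)) (at x)"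
    and "G differentiable (at (\<phi> y))" and "(f has_derivative (\<lambda>h. w \<bullet> h)) (at (\<phi> y))"
    and crit: "two_critical A (f \<circ> \<phi>) y"
    unfolding W_set_def twice_differentiable_def by blast
  then have "(\<lambda>h. G (\<phi> y) \<bullet> h) = (\<lambda>h. w \<bullet> h)"
    using has_derivative_unique[OF grad] by blast
  then have "G (\<phi> y) = w"
    by (simp add: fun_eq_iff vector_eq_rdot)
  obtain DG where DG: "(G has_derivative DG) (at (\<phi> y))"
    using \<open>G differentiable (at (\<phi> y))\<close> differentiable_def by blast
  obtain K where "K > 0" and K: "\<And>v. DG v \<bullet> v \<le> K * (v \<bullet> v)"
    using bounded_linear_inner_self_le[OF has_derivative_bounded_linear[OF DG]] by blast
  have "\<forall>(v, a) \<in> curve_jets A \<phi> y. w \<bullet> v = 0 \<and> 0 \<le> DG v \<bullet> v + w \<bullet> a"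
    using crit two_critical_comp_iff_curve_jets[OF A \<phi> grad DG] \<open>G (\<phi> y) = w\<close> by simp
  then have "\<forall>(v, a) \<in> curve_jets A \<phi> y. w \<bullet> v = 0 \<and> 0 \<le> K * (v \<bullet> v) + w \<bullet> a"
    using K by (auto intro: order_trans add_right_mono)
  with \<open>K > 0\<close> show "\<exists>\<alpha>>0. two_critical A (quadratic_model w \<alpha> (\<phi> y) \<circ> \<phi>) y"
    using two_critical_quadratic_model_iff[OF A \<phi>] by blast
next
  fix w assume "w \<in> {w. \<exists>\<alpha>>0. two_critical A (quadratic_model w \<alpha> (\<phi> y) \<circ> \<phi>) y}"
  then obtain \<alpha> where "two_critical A (quadratic_model w \<alpha> (\<phi> y) \<circ> \<phi>) y"
    by blast
  moreover have "(quadratic_model w \<alpha> (\<phi> y) has_derivative (\<lambda>h. w \<bullet> h)) (at (\<phi> y))"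
    using has_derivative_quadratic_model[of w \<alpha> "\<phi> y" "\<phi> y"] by simp
  ultimately show "w \<in> W_set A \<phi> y"
    unfolding W_set_def using twice_differentiable_quadratic_model by blast
qed

theorem proposition3p17:
  fixes A :: "('m::{t2_space, second_countable_topology} set \<times> ('m \<Rightarrow> 'n::euclidean_space)) set"
    and \<phi> :: "'m \<Rightarrow> 'e::euclidean_space"
    and y :: 'm
  assumes "smooth_atlas A"
    and "smooth_map A \<phi>"
  shows "W_set A \<phi> y =
           {w. \<exists>\<alpha>>0. two_critical A
                 ((\<lambda>x'. x' \<bullet> w + \<alpha> / 2 * (norm (x' - \<phi> y))\<^sup>2) \<circ> \<phi>) y}
       \<and> convex_cone (W_set A \<phi> y)"
  using W_set_eq_quadratic_models[OF assms] two_critical_quadratic_model_iff[OF assms]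
    convex_cone_quadratic_dual[of "curve_jets A \<phi> y"]
  by simp

end
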